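(* Let $G$ be a finite connected multigraph without self-loops, with boundary vertex $\partial$ and a collection of nonnegative generic weights $w$ on $\vec E$; let $T^*=T^*(w)$ be the MSA of $(G,\partial)$. Fix a vertex $v$ with outgoing edges $\vec e_1,\ldots,\vec e_d$, let $u=(\vec e_2)_+$, and suppose $\vec e_1\in T^*$ and $v\notin\mathfrak F_{T^*}(u)$. Let $\Sigma=\Sigma(u,v)$ be the set of endpoints of the edges of $(\mathfrak F_{T^*}(u)\cup\mathfrak F_{T^*}(v))\setminus(\mathfrak F_{T^*}(u)\cap\mathfrak F_{T^*}(v))$ other than $u\wedge v$. Let $\vec E_\Sigma$ be the set of all oriented edges whose tail lies in $\Sigma$, and $M_\Sigma=\max\{w(\vec e):\vec e\in\vec E_\Sigma\}$. Let $w'$ be a generic collection of weights with $$w'(\vec e)\ \ge 2M_\Sigma\ \text{ if }\vec e\in\vec E_\Sigma\setminus(T^*\cup\{\vec e_2\})\text{ or }\vec e=\vec e_1,\qquad w'(\vec e)=w(\vec e)\ \text{ otherwise}.$$ Then $T'=(T^*\setminus\{\vec e_1\})\cup\{\vec e_2\}$ is the MSA of $(G,\partial)$ for the weights $w'$.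
   Context: $\vec E$ is the set of oriented edges (both orientations of each edge); $\vec e_-$ tail, $\vec e_+$ head. Weights $(W_x)_{x\in N}$ are generic if $\sum_{x\in S}n_xW_x\ne0$ for all finite $S$ and integers $n_x$ not all zero. A spanning arborescence of $(G,\partial)$ is a set of oriented edges without oriented cycles in which every vertex except $\partial$ has exactly one outgoing edge and $\partial$ none; the MSA is the (unique for generic weights) one of minimal total weight. For a spanning arborescence $T$, $\mathfrak F_T(x)$ (the future of $x$) is the oriented path in $T$ from $x$ to $\partial$, viewed as a set of oriented edges; $u\wedge v$ is the first vertex at which $\mathfrak F_T(u)$ and $\mathfrak F_T(v)$ merge. *)

theory Defs
  imports Complex_Main
begin

text \<open>A finite multigraph: vertex set V, edge set E (edges of an abstract type, so
parallel edges are allowed), and endpoints ends e = (a,b).  An oriented edge is a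
pair (e, b): b = True means orientation from fst (ends e) to snd (ends e),
b = False the reverse.\<close>

type_synonym 'e oedge = "'e \<times> bool"

definition otail :: "('e \<Rightarrow> 'v \<times> 'v) \<Rightarrow> 'e oedge \<Rightarrow> 'v" where
  "otail ends a = (if snd a then fst (ends (fst a)) else snd (ends (fst a)))"

definition ohead :: "('e \<Rightarrow> 'v \<times> 'v) \<Rightarrow> 'e oedge \<Rightarrow> 'v" where
  "ohead ends a = (if snd a then snd (ends (fst a)) else fst (ends (fst a)))"

definition oedges :: "'e set \<Rightarrow> 'e oedge set" where
  "oedges E = E \<times> UNIV"

definition multigraph_no_loops :: "'v set \<Rightarrow> 'e set \<Rightarrow> ('e \<Rightarrow> 'v \<times> 'v) \<Rightarrow> bool" where
  "multigraph_no_loops V E ends \<longleftrightarrow> finite V \<and> finite E \<and>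
     (\<forall>e\<in>E. fst (ends e) \<in> V \<and> snd (ends e) \<in> V \<and> fst (ends e) \<noteq> snd (ends e))"

definition connected_graph :: "'v set \<Rightarrow> 'e set \<Rightarrow> ('e \<Rightarrow> 'v \<times> 'v) \<Rightarrow> bool" where
  "connected_graph V E ends \<longleftrightarrow>
     (\<forall>x\<in>V. \<forall>y\<in>V. (x, y) \<in> ({ends e | e. e \<in> E} \<union> {prod.swap (ends e) | e. e \<in> E})\<^sup>*)"

definition generic :: "'e set \<Rightarrow> ('e oedge \<Rightarrow> real) \<Rightarrow> bool" where
  "generic E w \<longleftrightarrow> (\<forall>n :: 'e oedge \<Rightarrow> int.
      (\<exists>x\<in>oedges E. n x \<noteq> 0) \<longrightarrow> (\<Sum>x\<in>oedges E. of_int (n x) * w x) \<noteq> 0)"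

definition arc_rel :: "('e \<Rightarrow> 'v \<times> 'v) \<Rightarrow> 'e oedge set \<Rightarrow> ('v \<times> 'v) set" where
  "arc_rel ends T = {(otail ends a, ohead ends a) | a. a \<in> T}"

definition spanning_arborescence ::
  "'v set \<Rightarrow> 'e set \<Rightarrow> ('e \<Rightarrow> 'v \<times> 'v) \<Rightarrow> 'v \<Rightarrow> 'e oedge set \<Rightarrow> bool" where
  "spanning_arborescence V E ends r T \<longleftrightarrow>
     T \<subseteq> oedges E \<and> acyclic (arc_rel ends T) \<and>
     (\<forall>x\<in>V - {r}. \<exists>!a. a \<in> T \<and> otail ends a = x) \<and>
     (\<forall>a\<in>T. otail ends a \<noteq> r)"

definition weight :: "('e oedge \<Rightarrow> real) \<Rightarrow> 'e oedge set \<Rightarrow> real" where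
  "weight w T = (\<Sum>a\<in>T. w a)"

text \<open>T is a minimum spanning arborescence (for generic weights it is unique).\<close>
definition is_MSA ::
  "'v set \<Rightarrow> 'e set \<Rightarrow> ('e \<Rightarrow> 'v \<times> 'v) \<Rightarrow> 'v \<Rightarrow> ('e oedge \<Rightarrow> real) \<Rightarrow> 'e oedge set \<Rightarrow> bool" where
  "is_MSA V E ends r w T \<longleftrightarrow> spanning_arborescence V E ends r T \<and>
     (\<forall>T'. spanning_arborescence V E ends r T' \<longrightarrow> weight w T \<le> weight w T')"

text \<open>Future of x in T: the oriented edges of the T-path from x to the root
(the edges of T whose tail is reachable from x along T).\<close>
definition future :: "('e \<Rightarrow> 'v \<times> 'v) \<Rightarrow> 'e oedge set \<Rightarrow> 'v \<Rightarrow> 'e oedge set" where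
  "future ends T x = {a \<in> T. (x, otail ends a) \<in> (arc_rel ends T)\<^sup>*}"

definition future_vertices :: "('e \<Rightarrow> 'v \<times> 'v) \<Rightarrow> 'e oedge set \<Rightarrow> 'v \<Rightarrow> 'v set" where
  "future_vertices ends T x = {y. (x, y) \<in> (arc_rel ends T)\<^sup>*}"

definition meet :: "('e \<Rightarrow> 'v \<times> 'v) \<Rightarrow> 'e oedge set \<Rightarrow> 'v \<Rightarrow> 'v \<Rightarrow> 'v" where
  "meet ends T u v = (THE z. z \<in> future_vertices ends T u \<inter> future_vertices ends T v \<and>
      (\<forall>y \<in> future_vertices ends T u \<inter> future_vertices ends T v.
          (z, y) \<in> (arc_rel ends T)\<^sup>*))"

definition Sigma_set :: "('e \<Rightarrow> 'v \<times> 'v) \<Rightarrow> 'e oedge set \<Rightarrow> 'v \<Rightarrow> 'v \<Rightarrow> 'v set" where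
  "Sigma_set ends T u v =
     (\<Union>a \<in> (future ends T u \<union> future ends T v) - (future ends T u \<inter> future ends T v).
        {otail ends a, ohead ends a}) - {meet ends T u v}"

end

theory Submission
  imports Defs
begin

text \<open>
Let \<open>T' = T\<^sup>* - e\<^sub>1 + e\<^sub>2\<close> and let \<open>P\<close> be the set of oriented edges whose weight is raised.
Since \<open>v\<close> is not on the future of \<open>u\<close>, \<open>T'\<close> is an arborescence, and
\<open>w'(T') = w(T\<^sup>*) - w(e\<^sub>1) + w(e\<^sub>2)\<close>. An arborescence using an edge of \<open>P\<close> costs at least
\<open>M\<^sub>\<Sigma> \<ge> w(e\<^sub>2) - w(e\<^sub>1)\<close> more under \<open>w'\<close> than under \<open>w\<close>, so it is no better than \<open>T'\<close>.
An arborescence \<open>S\<close> avoiding \<open>P\<close> has \<open>w'(S) = w(S)\<close>; it must use \<open>e\<^sub>2\<close> at \<open>v\<close> and the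
edge of \<open>T\<^sup>*\<close> at every other vertex of \<open>\<Sigma>\<close>. Hence the \<open>T\<^sup>*\<close>-paths from \<open>u\<close> and from the
head of \<open>e\<^sub>1\<close> to \<open>u \<and> v\<close> are paths of \<open>S - e\<^sub>2\<close>, which makes \<open>S - e\<^sub>2 + e\<^sub>1\<close> an
arborescence, and minimality of \<open>T\<^sup>*\<close> gives \<open>w(S) \<ge> w'(T')\<close>.
Only minimality is claimed.
\<close>

lemma arc_rel_iff: "(p, q) \<in> arc_rel ends T \<longleftrightarrow> (\<exists>a\<in>T. otail ends a = p \<and> ohead ends a = q)"
  unfolding arc_rel_def by blast

lemma arc_relI: "a \<in> T \<Longrightarrow> (otail ends a, ohead ends a) \<in> arc_rel ends T"
  unfolding arc_rel_def by blast

lemma arc_rel_insert: "arc_rel ends (insert a T) = insert (otail ends a, ohead ends a) (arc_rel ends T)"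
  unfolding arc_rel_def by blast

lemma arc_rel_mono: "T \<subseteq> T' \<Longrightarrow> arc_rel ends T \<subseteq> arc_rel ends T'"
  unfolding arc_rel_def by blast

lemma finite_arc_rel:
  assumes "finite T"
  shows "finite (arc_rel ends T)"
proof -
  have "arc_rel ends T = (\<lambda>a. (otail ends a, ohead ends a)) ` T"
    unfolding arc_rel_def by blast
  then show ?thesis using assms by simp
qed

lemma finite_oedges: "finite E \<Longrightarrow> finite (oedges E)"
  unfolding oedges_def by simp

lemma oedge_ends:
  assumes "multigraph_no_loops V E ends" "a \<in> oedges E"
  shows "otail ends a \<in> V" "ohead ends a \<in> V" "otail ends a \<noteq> ohead ends a"
  using assms unfolding multigraph_no_loops_def oedges_def otail_def ohead_def
  by (auto split: if_splits)

section \<open>Spanning arborescences\<close>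

context
  fixes V :: "'v set" and E :: "'e set" and ends :: "'e \<Rightarrow> 'v \<times> 'v" and r :: 'v
    and T :: "'e oedge set"
  assumes graph: "multigraph_no_loops V E ends"
    and sa: "spanning_arborescence V E ends r T"
begin

lemma arborescence_oedges: "T \<subseteq> oedges E"
  using sa unfolding spanning_arborescence_def by blast

lemma arborescence_tail_not_root: "a \<in> T \<Longrightarrow> otail ends a \<noteq> r"
  using sa unfolding spanning_arborescence_def by blast

lemma arborescence_finite: "finite T"
  using arborescence_oedges finite_oedges finite_subset graph
  unfolding multigraph_no_loops_def by metis

lemma arborescence_acyclic: "acyclic (arc_rel ends T)"
  using sa unfolding spanning_arborescence_def by blast

lemma arborescence_out_edge_unique:
  assumes "a \<in> T" "b \<in> T" "otail ends a = otail ends b"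
  shows "a = b"
proof -
  have "otail ends a \<in> V - {r}"
    using assms(1) arborescence_oedges oedge_ends[OF graph] arborescence_tail_not_root by blast
  then have "\<exists>!c. c \<in> T \<and> otail ends c = otail ends a"
    using sa unfolding spanning_arborescence_def by blast
  then show ?thesis using assms by metis
qed

lemma arborescence_out_edge_exists:
  assumes "z \<in> V" "z \<noteq> r"
  obtains a where "a \<in> T" "otail ends a = z"
  using sa assms unfolding spanning_arborescence_def by blast

lemma single_valued_arborescence: "single_valued (arc_rel ends T)"
  unfolding single_valued_def arc_rel_iff using arborescence_out_edge_unique by metis

lemma wf_arborescence: "wf (arc_rel ends T)" "wf ((arc_rel ends T)\<inverse>)"
  using finite_arc_rel[OF arborescence_finite] arborescence_acyclic
  by (blast intro: finite_acyclic_wf finite_acyclic_wf_converse)+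

lemma arborescence_reaches_root: "y \<in> V \<Longrightarrow> (y, r) \<in> (arc_rel ends T)\<^sup>*"
proof (induction y rule: wf_induct_rule[OF wf_arborescence(2)])
  case (1 y)
  show ?case
  proof (cases "y = r")
    case False
    then obtain a where a: "a \<in> T" "otail ends a = y"
      using arborescence_out_edge_exists 1(2) by blast
    then have step: "(y, ohead ends a) \<in> arc_rel ends T"
      using arc_relI by metis
    have "ohead ends a \<in> V"
      using a(1) arborescence_oedges oedge_ends(2)[OF graph] by blast
    then show ?thesis using 1(1) step by (meson converse_rtrancl_into_rtrancl converseI)
  qed simp
qed

lemma arborescence_exchange:
  assumes a: "a \<in> T" and b: "b \<in> oedges E" "otail ends b = otail ends a"
    and no_cycle: "(ohead ends b, otail ends b) \<notin> (arc_rel ends (T - {a}))\<^sup>*"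
  shows "spanning_arborescence V E ends r (insert b (T - {a}))"
proof -
  have "acyclic (arc_rel ends (T - {a}))"
    using acyclic_subset[OF arborescence_acyclic arc_rel_mono] by blast
  then have acyclic: "acyclic (arc_rel ends (insert b (T - {a})))"
    using no_cycle by (simp add: arc_rel_insert)
  have "\<exists>!c. c \<in> insert b (T - {a}) \<and> otail ends c = z" if z: "z \<in> V - {r}" for z
  proof (cases "z = otail ends a")
    case True
    have "c = b" if "c \<in> insert b (T - {a})" "otail ends c = z" for c
      using that True a arborescence_out_edge_unique[of c a] by blast
    then show ?thesis
      using True b by blast
  next
    case False
    then obtain c where "c \<in> T" "otail ends c = z"
      using arborescence_out_edge_exists z by blast
    note c = this
    have "d = c" if "d \<in> insert b (T - {a})" "otail ends d = z" for d
      using that False b c arborescence_out_edge_unique[of d c] by (metis DiffD1 insertE)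
    then show ?thesis
      using False c by blast
  qed
  then show ?thesis
    using a b acyclic arborescence_oedges arborescence_tail_not_root
    unfolding spanning_arborescence_def by auto
qed

lemma arborescence_exchange_off_future:
  assumes "a \<in> T" "b \<in> oedges E" "otail ends b = otail ends a"
    and "otail ends b \<notin> future_vertices ends T (ohead ends b)"
  shows "spanning_arborescence V E ends r (insert b (T - {a}))"
  using assms arborescence_exchange rtrancl_mono[OF arc_rel_mono[of "T - {a}" T]]
  unfolding future_vertices_def by blast

end

section \<open>The meet of two futures and the set \<open>\<Sigma>\<close>\<close>

lemma single_valued_least_common:
  assumes sv: "single_valued R" and wf: "wf R"
    and "c \<in> C" and from_u: "\<forall>y\<in>C. (u, y) \<in> R\<^sup>*"
  shows "\<exists>m\<in>C. \<forall>y\<in>C. (m, y) \<in> R\<^sup>*"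
proof -
  obtain m where m: "m \<in> C" and min: "\<And>y. (y, m) \<in> R\<^sup>+ \<Longrightarrow> y \<notin> C"
    using wfE_min[OF wf_trancl[OF wf] \<open>c \<in> C\<close>] by blast
  have "(m, y) \<in> R\<^sup>*" if "y \<in> C" for y
    using single_valued_confluent[OF sv, of u m y] from_u m min that
    by (metis rtranclD)
  then show ?thesis using m by blast
qed

lemma meet_least_common:
  assumes graph: "multigraph_no_loops V E ends"
    and sa: "spanning_arborescence V E ends r T"
    and "u \<in> V" "v \<in> V"
  shows "meet ends T u v \<in> future_vertices ends T u \<inter> future_vertices ends T v"
    and "y \<in> future_vertices ends T u \<inter> future_vertices ends T v \<Longrightarrow>
      (meet ends T u v, y) \<in> (arc_rel ends T)\<^sup>*"
proof -
  let ?R = "arc_rel ends T"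
  let ?C = "future_vertices ends T u \<inter> future_vertices ends T v"
  let ?least = "\<lambda>m. m \<in> ?C \<and> (\<forall>y\<in>?C. (m, y) \<in> ?R\<^sup>*)"
  have "r \<in> ?C"
    using arborescence_reaches_root[OF graph sa] assms(3,4) unfolding future_vertices_def by blast
  then have "\<exists>m. ?least m"
    using single_valued_least_common[OF single_valued_arborescence[OF graph sa]
        wf_arborescence(1)[OF graph sa], of r ?C u]
    unfolding future_vertices_def by blast
  moreover have "m = m'" if "?least m" "?least m'" for m m'
    using that acyclic_impl_antisym_rtrancl[OF arborescence_acyclic[OF graph sa]]
    by (meson antisymD)
  ultimately have "\<exists>!m. ?least m" by blast
  then have "?least (meet ends T u v)"
    unfolding meet_def by (rule theI')
  then show "meet ends T u v \<in> ?C" "y \<in> ?C \<Longrightarrow> (meet ends T u v, y) \<in> ?R\<^sup>*"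
    by blast+
qed

lemma in_Sigma_setI:
  assumes graph: "multigraph_no_loops V E ends"
    and sa: "spanning_arborescence V E ends r T"
    and "u \<in> V" "v \<in> V" and a: "a \<in> T" "otail ends a = p"
    and exactly_one: "(p \<in> future_vertices ends T u) \<noteq> (p \<in> future_vertices ends T v)"
  shows "p \<in> Sigma_set ends T u v"
proof -
  have "a \<in> future ends T u \<longleftrightarrow> p \<in> future_vertices ends T u"
    and "a \<in> future ends T v \<longleftrightarrow> p \<in> future_vertices ends T v"
    using a unfolding future_def future_vertices_def by auto
  moreover have "p \<noteq> meet ends T u v"
    using meet_least_common(1)[OF assms(1-4)] exactly_one by auto
  ultimately show ?thesis
    using a exactly_one unfolding Sigma_set_def by blast
qed

lemma tail_in_Sigma_set:
  assumes graph: "multigraph_no_loops V E ends"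
    and sa: "spanning_arborescence V E ends r T"
    and "u \<in> V" and e: "e \<in> T" "otail ends e = v"
    and "v \<notin> future_vertices ends T u"
  shows "v \<in> Sigma_set ends T u v"
proof -
  have "v \<in> V"
    using e arborescence_oedges[OF graph sa] oedge_ends(1)[OF graph] by blast
  then show ?thesis
    using in_Sigma_setI[OF graph sa \<open>u \<in> V\<close> _ e] assms(6)
    unfolding future_vertices_def by simp
qed

section \<open>Rerouting an arborescence through \<open>e\<^sub>1\<close>\<close>

lemma rtrancl_path_transfer:
  assumes "(y, z) \<in> R\<^sup>*"
    and "\<And>p q. (y, p) \<in> R\<^sup>* \<Longrightarrow> (p, q) \<in> R \<Longrightarrow> (q, z) \<in> R\<^sup>* \<Longrightarrow> (p, q) \<in> R'"
  shows "(y, z) \<in> R'\<^sup>*"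
  using assms
proof (induction rule: converse_rtrancl_induct)
  case (step y y')
  then have "(y, y') \<in> R'" and "(y', z) \<in> R'\<^sup>*"
    by (blast intro: converse_rtrancl_into_rtrancl)+
  then show ?case by (rule converse_rtrancl_into_rtrancl)
qed simp

lemma arborescence_agree_on_tails:
  assumes graph: "multigraph_no_loops V E ends"
    and saT: "spanning_arborescence V E ends r T"
    and saS: "spanning_arborescence V E ends r S"
    and e1: "e1 \<in> T" "otail ends e1 = v" and e2: "otail ends e2 = v"
    and "v \<in> \<Sigma>" and e1_S: "e1 \<notin> S"
    and agree: "\<forall>a\<in>S. otail ends a \<in> \<Sigma> \<longrightarrow> a \<in> T \<union> {e2}"
  shows "e2 \<in> S"
    and "a \<in> T \<Longrightarrow> otail ends a \<in> \<Sigma> \<Longrightarrow> otail ends a \<noteq> v \<Longrightarrow> a \<in> S - {e2}"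
proof -
  have tail_V: "otail ends a \<in> V - {r}" if "a \<in> T" for a
    using that arborescence_oedges[OF graph saT] oedge_ends[OF graph]
      arborescence_tail_not_root[OF graph saT] by blast
  obtain b where b: "b \<in> S" "otail ends b = v"
    using arborescence_out_edge_exists[OF graph saS] tail_V[OF e1(1)] e1(2) by blast
  moreover have "b \<notin> T"
    using b e1 e1_S arborescence_out_edge_unique[OF graph saT, of b e1] by auto
  ultimately show "e2 \<in> S" using agree \<open>v \<in> \<Sigma>\<close> by blast
  assume a: "a \<in> T" "otail ends a \<in> \<Sigma>" "otail ends a \<noteq> v"
  obtain c where c: "c \<in> S" "otail ends c = otail ends a"
    using arborescence_out_edge_exists[OF graph saS] tail_V[OF a(1)] by blast
  then have "c \<in> T" using agree a(2,3) e2 by auto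
  then show "a \<in> S - {e2}"
    using c a e2 arborescence_out_edge_unique[OF graph saT, of c a] by auto
qed

lemma paths_to_meet_transfer:
  assumes graph: "multigraph_no_loops V E ends"
    and saT: "spanning_arborescence V E ends r T"
    and e1: "e1 \<in> T" "otail ends e1 = v" and "u \<in> V"
    and v_notin: "v \<notin> future_vertices ends T u"
    and sub: "\<And>a. a \<in> T \<Longrightarrow> otail ends a \<in> Sigma_set ends T u v \<Longrightarrow> otail ends a \<noteq> v \<Longrightarrow> a \<in> S"
  shows "(u, meet ends T u v) \<in> (arc_rel ends S)\<^sup>*"
    and "(ohead ends e1, meet ends T u v) \<in> (arc_rel ends S)\<^sup>*"
proof -
  define m where "m = meet ends T u v"
  define RT where "RT = arc_rel ends T"
  let ?FV = "future_vertices ends T"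
  have "v \<in> V"
    using e1 arborescence_oedges[OF graph saT] oedge_ends(1)[OF graph] by blast
  note meet = meet_least_common[OF graph saT \<open>u \<in> V\<close> this, folded m_def RT_def]
  have acT: "acyclic RT" using arborescence_acyclic[OF graph saT] RT_def by simp
  have vx: "(v, ohead ends e1) \<in> RT" using arc_relI[OF e1(1)] e1(2) RT_def by metis
  have uv: "(u, v) \<notin> RT\<^sup>*" using v_notin unfolding future_vertices_def RT_def by simp
  have on_paths: "(p, q) \<in> arc_rel ends S"
    if from_uv: "(u, p) \<in> RT\<^sup>* \<or> (v, p) \<in> RT\<^sup>+" and pq: "(p, q) \<in> RT" and qm: "(q, m) \<in> RT\<^sup>*"
    for p q
  proof -
    obtain a where a: "a \<in> T" "otail ends a = p" "ohead ends a = q"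
      using pq arc_rel_iff RT_def by metis
    have "p \<noteq> v" using from_uv uv acT unfolding acyclic_def by blast
    moreover have "(p, m) \<in> RT\<^sup>+" using pq qm by (rule rtrancl_into_trancl2)
    then have "p \<notin> ?FV u \<inter> ?FV v"
      using meet(2) acT unfolding acyclic_def by (meson rtrancl_trancl_trancl)
    moreover have "p \<in> ?FV u \<union> ?FV v"
      using from_uv unfolding future_vertices_def RT_def by (auto dest: trancl_into_rtrancl)
    ultimately have "p \<in> Sigma_set ends T u v" "p \<noteq> v"
      using in_Sigma_setI[OF graph saT \<open>u \<in> V\<close> \<open>v \<in> V\<close> a(1,2)] by blast+
    then show ?thesis using sub[OF a(1)] arc_relI a(2,3) by metis
  qed
  have "(u, m) \<in> RT\<^sup>*" using meet(1) unfolding future_vertices_def RT_def by blast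
  then show "(u, m) \<in> (arc_rel ends S)\<^sup>*"
    by (rule rtrancl_path_transfer) (simp add: on_paths)
  have "(v, m) \<in> RT\<^sup>+"
    using meet(1) uv unfolding future_vertices_def RT_def by (metis IntD1 IntD2 mem_Collect_eq rtranclD)
  then have "(ohead ends e1, m) \<in> RT\<^sup>*"
    using vx single_valued_arborescence[OF graph saT] RT_def by (metis single_valuedD tranclD)
  then show "(ohead ends e1, m) \<in> (arc_rel ends S)\<^sup>*"
    by (rule rtrancl_path_transfer) (meson on_paths vx rtrancl_into_trancl2)
qed

lemma arborescence_reroute:
  assumes graph: "multigraph_no_loops V E ends"
    and saT: "spanning_arborescence V E ends r T"
    and saS: "spanning_arborescence V E ends r S"
    and e1: "e1 \<in> T" "otail ends e1 = v"
    and e2: "e2 \<in> oedges E" "otail ends e2 = v"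
    and v_notin: "v \<notin> future_vertices ends T (ohead ends e2)"
    and avoid: "S \<inter> ({b \<in> oedges E. otail ends b \<in> Sigma_set ends T (ohead ends e2) v} - (T \<union> {e2})
      \<union> {e1}) = {}"
  shows "e2 \<in> S \<and> spanning_arborescence V E ends r (insert e1 (S - {e2}))"
proof -
  define u where "u = ohead ends e2"
  define m where "m = meet ends T u v"
  define RS where "RS = arc_rel ends S"
  define R0 where "R0 = arc_rel ends (S - {e2})"
  have e1E: "e1 \<in> oedges E" using e1(1) arborescence_oedges[OF graph saT] by blast
  have uV: "u \<in> V" using oedge_ends(2)[OF graph e2(1)] u_def by simp
  have "e1 \<notin> S" and "\<forall>a\<in>S. otail ends a \<in> Sigma_set ends T u v \<longrightarrow> a \<in> T \<union> {e2}"
    using avoid arborescence_oedges[OF graph saS] u_def by blast+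
  note agreement = arborescence_agree_on_tails[OF graph saT saS e1 e2(2)
      tail_in_Sigma_set[OF graph saT uV e1 v_notin[folded u_def]] this]
  have e2_S: "e2 \<in> S" by (rule agreement(1))
  have um: "(u, m) \<in> R0\<^sup>*" and xm: "(ohead ends e1, m) \<in> R0\<^sup>*"
    using paths_to_meet_transfer[OF graph saT e1 uV v_notin[folded u_def] agreement(2)]
    unfolding m_def R0_def by blast+
  have v_sink: "(v, y) \<notin> R0" for y
  proof
    assume "(v, y) \<in> R0"
    then obtain c where "c \<in> S - {e2}" "otail ends c = v" using arc_rel_iff R0_def by metis
    then show False
      using e2_S e2(2) arborescence_out_edge_unique[OF graph saS, of c e2] by (metis DiffE singletonI)
  qed
  have R0_RS: "R0 \<subseteq> RS" using arc_rel_mono R0_def RS_def by blast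
  \<comment> \<open>\<open>v\<close> is a sink of \<open>S - e\<^sub>2\<close>, so such a path would extend the one to \<open>m\<close>,
    closing the cycle \<open>v, u, \<dots>, m, \<dots>, v\<close> in \<open>S\<close>.\<close>
  have "(ohead ends e1, v) \<notin> R0\<^sup>*"
  proof
    assume "(ohead ends e1, v) \<in> R0\<^sup>*"
    moreover have "single_valued R0"
      using single_valued_subset[OF R0_RS] single_valued_arborescence[OF graph saS] RS_def by blast
    ultimately have "(m, v) \<in> R0\<^sup>*"
      using single_valued_confluent xm v_sink by (metis converse_rtranclE)
    moreover have "(v, u) \<in> RS" using arc_relI[OF e2_S] e2(2) u_def RS_def by metis
    ultimately have "(v, v) \<in> RS\<^sup>+"
      using um rtrancl_mono[OF R0_RS] by (meson rtrancl_into_trancl2 rtrancl_trans subsetD)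
    then show False
      using arborescence_acyclic[OF graph saS] RS_def unfolding acyclic_def by blast
  qed
  then show ?thesis
    using arborescence_exchange[OF graph saS e2_S e1E] e1(2) e2(2) R0_def e2_S by metis
qed

section \<open>Weights\<close>

lemma weight_exchange:
  assumes "finite S" "a \<in> S" "b \<notin> S"
  shows "weight w (insert b (S - {a})) = weight w S - w a + w b"
  using assms sum.remove[OF assms(1,2), of w] unfolding weight_def by simp

lemma weight_add_increment_le:
  assumes "finite S" "\<And>a. a \<in> S \<Longrightarrow> w a \<le> w' a" "f \<in> S"
  shows "weight w S + (w' f - w f) \<le> weight w' S"
proof -
  have "w' f - w f \<le> (\<Sum>a\<in>S. w' a - w a)"
    by (rule member_le_sum) (use assms in auto)
  then show ?thesis unfolding weight_def by (simp add: sum_subtractf)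
qed

lemma is_MSA_exchange_with_penalty:
  assumes graph: "multigraph_no_loops V E ends"
    and msa: "is_MSA V E ends r w T"
    and sa': "spanning_arborescence V E ends r (insert e2 (T - {e1}))"
    and e1_T: "e1 \<in> T" and e2_T: "e2 \<notin> T"
    and e1_P: "e1 \<in> P" and P_T': "P \<inter> insert e2 (T - {e1}) = {}"
    and pen: "\<And>a. a \<in> P \<Longrightarrow> w a + M \<le> w' a"
    and unchanged: "\<And>a. a \<in> oedges E \<Longrightarrow> a \<notin> P \<Longrightarrow> w' a = w a"
    and M_nonneg: "0 \<le> M" and M_bound: "w e2 - w e1 \<le> M"
    and reroute: "\<And>S. spanning_arborescence V E ends r S \<Longrightarrow> S \<inter> P = {} \<Longrightarrow>
        e2 \<in> S \<and> spanning_arborescence V E ends r (insert e1 (S - {e2}))"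
  shows "is_MSA V E ends r w' (insert e2 (T - {e1}))"
proof -
  let ?T' = "insert e2 (T - {e1})"
  have saT: "spanning_arborescence V E ends r T"
    and min: "\<And>S. spanning_arborescence V E ends r S \<Longrightarrow> weight w T \<le> weight w S"
    using msa unfolding is_MSA_def by blast+
  have "weight w' ?T' = weight w ?T'"
    unfolding weight_def using unchanged arborescence_oedges[OF graph sa'] P_T'
    by (intro sum.cong) auto
  also have "\<dots> = weight w T - w e1 + w e2"
    by (rule weight_exchange[OF arborescence_finite[OF graph saT] e1_T e2_T])
  finally have wT': "weight w' ?T' = weight w T - w e1 + w e2" .
  have "weight w' ?T' \<le> weight w' S" if saS: "spanning_arborescence V E ends r S" for S
  proof (cases "S \<inter> P = {}")
    case True
    then have e2_S: "e2 \<in> S" and saS': "spanning_arborescence V E ends r (insert e1 (S - {e2}))"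
      using reroute saS by blast+
    have "weight w' S = weight w S"
      unfolding weight_def using unchanged arborescence_oedges[OF graph saS] True
      by (intro sum.cong) auto
    moreover have "weight w (insert e1 (S - {e2})) = weight w S - w e2 + w e1"
      using weight_exchange[OF arborescence_finite[OF graph saS] e2_S] True e1_P by blast
    ultimately show ?thesis using wT' min[OF saS'] by linarith
  next
    case False
    then obtain f where f: "f \<in> S" "f \<in> P" by blast
    have "w a \<le> w' a" if "a \<in> S" for a
      using pen[of a] unchanged[of a] arborescence_oedges[OF graph saS] that M_nonneg
      by (cases "a \<in> P") auto
    then have "weight w S + (w' f - w f) \<le> weight w' S"
      using weight_add_increment_le[OF arborescence_finite[OF graph saS]] f(1) by blast
    then show ?thesis using wT' min[OF saS] pen[OF f(2)] M_bound by linarith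
  qed
  then show ?thesis unfolding is_MSA_def using sa' by blast
qed

theorem mainTheorem11:
  fixes V :: "'v set" and E :: "'e set" and ends :: "'e \<Rightarrow> 'v \<times> 'v" and r :: 'v
    and w w' :: "'e oedge \<Rightarrow> real" and Tstar :: "'e oedge set"
    and v :: 'v and e1 e2 :: "'e oedge"
  assumes graph: "multigraph_no_loops V E ends"
    and conn: "connected_graph V E ends"
    and root: "r \<in> V"
    and nonneg: "\<forall>a\<in>oedges E. w a \<ge> 0"
    and gen: "generic E w"
    and msa: "is_MSA V E ends r w Tstar"
    and v_in: "v \<in> V"
    and e1: "e1 \<in> oedges E" "otail ends e1 = v"
    and e2: "e2 \<in> oedges E" "otail ends e2 = v"
    and e12: "e1 \<noteq> e2"
    and e1_T: "e1 \<in> Tstar"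
    and v_notin: "v \<notin> future_vertices ends Tstar (ohead ends e2)"
    and w'_big: "\<forall>a\<in>oedges E.
        (a \<in> {b \<in> oedges E. otail ends b \<in> Sigma_set ends Tstar (ohead ends e2) v} - (Tstar \<union> {e2})
          \<or> a = e1) \<longrightarrow>
        w' a \<ge> 2 * Max (w ` {b \<in> oedges E. otail ends b \<in> Sigma_set ends Tstar (ohead ends e2) v})"
    and w'_eq: "\<forall>a\<in>oedges E.
        \<not> (a \<in> {b \<in> oedges E. otail ends b \<in> Sigma_set ends Tstar (ohead ends e2) v} - (Tstar \<union> {e2})
          \<or> a = e1) \<longrightarrow> w' a = w a"
    and gen': "generic E w'"
  shows "is_MSA V E ends r w' ((Tstar - {e1}) \<union> {e2})"
proof -
  define u where "u = ohead ends e2"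
  define ES where "ES = {b \<in> oedges E. otail ends b \<in> Sigma_set ends Tstar u v}"
  define M where "M = Max (w ` ES)"
  define P where "P = ES - (Tstar \<union> {e2}) \<union> {e1}"
  have saT: "spanning_arborescence V E ends r Tstar" using msa unfolding is_MSA_def by blast
  have "u \<in> V" using oedge_ends(2)[OF graph e2(1)] u_def by simp
  then have "v \<in> Sigma_set ends Tstar u v"
    using tail_in_Sigma_set[OF graph saT _ e1_T e1(2)] v_notin u_def by blast
  then have e1_ES: "e1 \<in> ES" and e2_ES: "e2 \<in> ES" using e1 e2 ES_def by auto
  have "finite (oedges E)" using graph finite_oedges unfolding multigraph_no_loops_def by blast
  then have le_M: "a \<in> ES \<Longrightarrow> w a \<le> M" for a
    unfolding M_def ES_def by (intro Max_ge) auto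
  have e2_T: "e2 \<notin> Tstar"
    using e12 e1 e2 e1_T arborescence_out_edge_unique[OF graph saT, of e2 e1] by auto
  have sa': "spanning_arborescence V E ends r (insert e2 (Tstar - {e1}))"
    using arborescence_exchange_off_future[OF graph saT e1_T e2(1)] e1(2) e2(2) v_notin by simp
  have "is_MSA V E ends r w' (insert e2 (Tstar - {e1}))"
  proof (rule is_MSA_exchange_with_penalty[OF graph msa sa' e1_T e2_T])
    show "e1 \<in> P" "P \<inter> insert e2 (Tstar - {e1}) = {}"
      unfolding P_def using e12 by blast+
    show "w a + M \<le> w' a" if "a \<in> P" for a
    proof -
      have "2 * M \<le> w' a"
        using that w'_big e1(1) unfolding P_def ES_def M_def u_def by blast
      moreover have "w a \<le> M" using that e1_ES le_M unfolding P_def by blast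
      ultimately show ?thesis by linarith
    qed
    show "w' a = w a" if "a \<in> oedges E" "a \<notin> P" for a
      using that w'_eq unfolding P_def ES_def u_def by blast
    show "0 \<le> M" "w e2 - w e1 \<le> M"
      using le_M[OF e1_ES] le_M[OF e2_ES] nonneg e1(1) by auto
    show "e2 \<in> S \<and> spanning_arborescence V E ends r (insert e1 (S - {e2}))"
      if "spanning_arborescence V E ends r S" "S \<inter> P = {}" for S
      using arborescence_reroute[OF graph saT that(1) e1_T e1(2) e2 v_notin] that(2)
      unfolding P_def ES_def u_def by blast
  qed
  then show ?thesis by (simp add: insert_commute)
qed

end
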